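(* For $n\ge 1$ let $X_n$ be the random variable with \[ \mathbb{P}(X_n=m)=\frac{[z^{2n}x^m]G(z,x)}{[z^{2n}]G(z,1)}. \] Then $X_n/n$ converges in law, with convergence of all moments, to a random variable $X$ with the $\mathrm{Beta}(2,1)$ distribution, i.e. with density $f_X(x)=2x$ for $x\in[0,1]$ and $0$ otherwise; its moments are $\mathbb{E}(X^r)=\frac{2}{r+2}$.
   Context: A bicolored Dyck path is a finite sequence of steps from $\{U_1,U_2,D\}$ ($U_1,U_2$ raise the height by $1$, $D$ lowers it by $1$) starting and ending at height $0$ and never going below height $0$; its length is its number of steps, and its up-steps are its $U_1$ and $U_2$ steps. For a bicolored Dyck path with exactly one $U_2$ step, its weight is $p$, where the $U_2$ step is the $p$-th step of the path. Let $g_{n,m}$ be the total weight of such paths of length $n$ whose $U_2$ step is the $m$-th up-step, and $G(z,x)=\sum_{n,m}g_{n,m}z^nx^m$. (Equivalently, $X_n$ is the column index of the unique bottom-row cell of a uniformly random tableau with walls and holes of type $(n,n-1,1)$.) *)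

theory Defs
  imports "HOL-Probability.Probability"
begin

datatype step = U1 | U2 | D

fun delta :: "step \<Rightarrow> int" where
  "delta U1 = 1" | "delta U2 = 1" | "delta D = -1"

definition height :: "step list \<Rightarrow> int" where
  "height w = (\<Sum>s\<leftarrow>w. delta s)"

definition dyck :: "step list \<Rightarrow> bool" where
  "dyck w \<longleftrightarrow> height w = 0 \<and> (\<forall>k\<le>length w. height (take k w) \<ge> 0)"

definition is_up :: "step \<Rightarrow> bool" where
  "is_up s \<longleftrightarrow> s = U1 \<or> s = U2"

definition paths :: "nat \<Rightarrow> nat \<Rightarrow> step list set" where
  "paths n m = {w. set w \<subseteq> {U1, U2, D} \<and> length w = n \<and> dyck w
      \<and> length (filter (\<lambda>s. s = U2) w) = 1
      \<and> (\<exists>k<length w. w ! k = U2 \<and> length (filter is_up (take (Suc k) w)) = m)}"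

text \<open>Weight: the (1-based) position p of the U2 step.\<close>
definition weight :: "step list \<Rightarrow> nat" where
  "weight w = Suc (THE k. k < length w \<and> w ! k = U2)"

definition g :: "nat \<Rightarrow> nat \<Rightarrow> nat" where
  "g n m = (\<Sum>w\<in>paths n m. weight w)"

text \<open>Coefficient [z^n] G(z,1) = sum over m of g n m (only m \<le> n contribute).\<close>
definition Gtot :: "nat \<Rightarrow> nat" where
  "Gtot n = (\<Sum>m\<le>n. g n m)"

definition probX :: "nat \<Rightarrow> nat \<Rightarrow> real" where
  "probX n m = real (g (2*n) m) / real (Gtot (2*n))"

definition law_scaled :: "nat \<Rightarrow> real measure" where
  "law_scaled n = distr (density (count_space UNIV) (\<lambda>m. ennreal (probX n m))) borel
                        (\<lambda>m::nat. real m / real n)"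

definition beta21 :: "real measure" where
  "beta21 = density lborel (\<lambda>x. ennreal (2 * x) * indicator {0..1} x)"

end

theory Submission
  imports Defs "HOL-Real_Asymp.Real_Asymp"
begin

(* Forgetting the colour of the U2 step maps the paths counted by g (2n) m bijectively onto
   the Dyck paths v over {U1, D} of semilength n, the U2 step becoming the m-th up step of v.
   If that up step starts at height h, its position is 2m - 1 - h, so
     (\<Sum>m\<le>M. g (2n) m) = M^2 C_n - H(n, M),
   where C_n counts Dyck paths and H(n, M) adds up the starting heights of their first M
   up steps. Heights beyond \<epsilon>n occur only on a fraction of paths that is exponentially small:
   passing through height j costs a factor exp (-j^2/2n) against the central binomial
   coefficient, and rotating words to their lowest prefix gives C_n \<ge> binom(2n, n) / 2n.
   Hence H(n, n) = o(n^2 C_n), so P(X_n \<le> x n) tends to x^2, the distribution function of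
   Beta(2, 1); the moments follow because X_n / n takes values in [0, 1]. *)

lemma height_Nil [simp]: "height [] = 0"
  by (simp add: height_def)

lemma height_Cons [simp]: "height (s # w) = delta s + height w"
  by (simp add: height_def)

lemma height_append [simp]: "height (u @ w) = height u + height w"
  by (simp add: height_def)

lemma height_take_add_drop: "height (take t w) + height (drop t w) = height w"
  by (metis append_take_drop_id height_append)

definition ups :: "step list \<Rightarrow> nat" where
  "ups w = length (filter (\<lambda>s. s = U1) w)"

lemma ups_Nil [simp]: "ups [] = 0"
  by (simp add: ups_def)

lemma ups_Cons [simp]: "ups (s # w) = (if s = U1 then Suc (ups w) else ups w)"
  by (simp add: ups_def)

lemma ups_append [simp]: "ups (u @ w) = ups u + ups w"
  by (simp add: ups_def)

lemma ups_le_length: "ups w \<le> length w"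
  by (simp add: ups_def)

lemma ups_take_le: "ups (take t w) \<le> ups w"
  by (metis append_take_drop_id le_add1 ups_append)

lemma height_eq_ups: "set w \<subseteq> {U1, D} \<Longrightarrow> height w = 2 * int (ups w) - int (length w)"
  by (induction w) auto

lemma height_le_ups: "set w \<subseteq> {U1, D} \<Longrightarrow> height w \<le> int (ups w)"
  using height_eq_ups[of w] ups_le_length[of w] by simp

definition updown_words :: "nat \<Rightarrow> nat \<Rightarrow> step list set" where
  "updown_words L c = {w. set w \<subseteq> {U1, D} \<and> length w = L \<and> ups w = c}"

lemma updown_words_Suc:
  "updown_words (Suc L) c =
     (if c = 0 then {} else Cons U1 ` updown_words L (c - 1)) \<union> Cons D ` updown_words L c"
proof -
  have "w \<in> updown_words (Suc L) c \<longleftrightarrow>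
        w \<in> (if c = 0 then {} else Cons U1 ` updown_words L (c - 1)) \<union> Cons D ` updown_words L c"
    for w
  proof (cases w)
    case Nil
    then show ?thesis by (auto simp: updown_words_def)
  next
    case (Cons s v)
    then show ?thesis by (cases s) (auto simp: updown_words_def)
  qed
  then show ?thesis by blast
qed

lemma finite_updown_words: "finite (updown_words L c)"
proof (rule finite_subset)
  show "updown_words L c \<subseteq> {w. set w \<subseteq> {U1, D} \<and> length w = L}"
    by (auto simp: updown_words_def)
qed (simp add: finite_lists_length_eq)

lemma card_updown_words: "card (updown_words L c) = L choose c"
proof (induction L arbitrary: c)
  case 0
  have "updown_words 0 c = (if c = 0 then {[]} else {})"
    by (auto simp: updown_words_def)
  then show ?case by simp
next
  case (Suc L)
  show ?case
  proof (cases c)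
    case 0
    then show ?thesis using Suc.IH by (simp add: updown_words_Suc card_image)
  next
    case (Suc c')
    then have "card (updown_words (Suc L) c)
        = card (Cons U1 ` updown_words L c' \<union> Cons D ` updown_words L c)"
      by (simp add: updown_words_Suc)
    also have "\<dots> = card (Cons U1 ` updown_words L c') + card (Cons D ` updown_words L c)"
      by (rule card_Un_disjoint) (auto simp: finite_updown_words)
    also have "\<dots> = (L choose c') + (L choose c)"
      using Suc.IH by (simp add: card_image)
    finally show ?thesis using Suc by simp
  qed
qed

section \<open>Dyck paths and the rotation bound\<close>

definition dyck_paths :: "nat \<Rightarrow> step list set" where
  "dyck_paths n = {w. set w \<subseteq> {U1, D} \<and> length w = 2 * n \<and> dyck w}"

lemma finite_dyck_paths: "finite (dyck_paths n)"
proof (rule finite_subset)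
  show "dyck_paths n \<subseteq> {w. set w \<subseteq> {U1, D} \<and> length w = 2 * n}"
    by (auto simp: dyck_paths_def)
qed (simp add: finite_lists_length_eq)

lemma ups_dyck_path: "w \<in> dyck_paths n \<Longrightarrow> ups w = n"
  using height_eq_ups[of w] by (auto simp: dyck_paths_def dyck_def)

lemma dyck_paths_subset_updown_words: "dyck_paths n \<subseteq> updown_words (2 * n) n"
  using ups_dyck_path by (auto simp: dyck_paths_def updown_words_def)

lemma ex_prefix_min:
  assumes "height w = 0" "w \<noteq> []"
  shows "\<exists>r<length w. \<forall>t\<le>length w. height (take r w) \<le> height (take t w)"
proof -
  let ?f = "\<lambda>t. height (take t w)"
  let ?m = "Min (?f ` {..<length w})"
  have "?m \<in> ?f ` {..<length w}"
    using assms(2) by (intro Min_in) auto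
  then obtain r where r: "r < length w" "?f r = ?m"
    by auto
  have "?f r \<le> ?f t" if "t \<le> length w" for t
  proof (cases "t = length w")
    case True
    have "?m \<le> ?f 0"
      using assms(2) by (intro Min_le finite_imageI imageI) auto
    then show ?thesis using True assms(1) r by simp
  next
    case False
    then show ?thesis using r that by simp
  qed
  then show ?thesis using r(1) by blast
qed

lemma dyck_rotate_at_prefix_min:
  assumes h0: "height w = 0" and r: "r < length w"
    and r_min: "\<forall>t\<le>length w. height (take r w) \<le> height (take t w)"
  shows "dyck (rotate r w)"
proof -
  let ?L = "length w"
  have rot: "rotate r w = drop r w @ take r w"
    using rotate_drop_take[of r w] r by simp
  have "height (take k (rotate r w)) \<ge> 0" if k: "k \<le> ?L" for k
  proof (cases "k \<le> ?L - r")
    case True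
    then have "take k (rotate r w) = take k (drop r w)"
      unfolding rot by simp
    moreover have "height (take r w) + height (take k (drop r w)) = height (take (r + k) w)"
      by (simp add: take_add)
    moreover have "height (take r w) \<le> height (take (r + k) w)"
      using r_min True r by simp
    ultimately show ?thesis by simp
  next
    case False
    then have "take k (rotate r w) = drop r w @ take (k - (?L - r)) w"
      unfolding rot using r k by (simp add: take_take min_def)
    moreover have "height (take r w) \<le> height (take (k - (?L - r)) w)"
      using r_min k by simp
    ultimately show ?thesis using height_take_add_drop[of r w] h0 by simp
  qed
  moreover have "height (rotate r w) = 0"
    unfolding rot using height_take_add_drop[of r w] h0 by simp
  ultimately show ?thesis unfolding dyck_def by simp
qed

text \<open>A word with as many up as down steps, rotated to start after its lowest prefix, is a
  Dyck path; the rotation is undone given its offset.\<close>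

lemma central_binomial_le_card_dyck_paths:
  assumes "n \<ge> 1"
  shows "(2 * n choose n) \<le> 2 * n * card (dyck_paths n)"
proof -
  have "\<exists>r<length w. \<forall>t\<le>length w. height (take r w) \<le> height (take t w)"
    if "w \<in> updown_words (2 * n) n" for w
    using that assms height_eq_ups[of w] by (intro ex_prefix_min) (auto simp: updown_words_def)
  then obtain rr where rr: "\<And>w. w \<in> updown_words (2 * n) n \<Longrightarrow>
      rr w < length w \<and> (\<forall>t\<le>length w. height (take (rr w) w) \<le> height (take t w))"
    by metis
  define rot where "rot w = (rr w, rotate (rr w) w)" for w
  have "inj_on rot (updown_words (2 * n) n)"
  proof (rule inj_onI)
    fix w w'
    assume w: "w \<in> updown_words (2 * n) n" and w': "w' \<in> updown_words (2 * n) n"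
      and "rot w = rot w'"
    then have "rr w = rr w'" "rotate (rr w) w = rotate (rr w) w'"
      by (auto simp: rot_def)
    then have "rotate (2 * n - rr w) (rotate (rr w) w) = rotate (2 * n - rr w) (rotate (rr w) w')"
      by simp
    then show "w = w'"
      using rr[OF w] w w' by (simp add: rotate_rotate updown_words_def)
  qed
  moreover have "rot ` updown_words (2 * n) n \<subseteq> {..<2 * n} \<times> dyck_paths n"
  proof
    fix x assume "x \<in> rot ` updown_words (2 * n) n"
    then obtain w where w: "w \<in> updown_words (2 * n) n" and x: "x = rot w"
      by auto
    have "height w = 0"
      using w height_eq_ups[of w] by (auto simp: updown_words_def)
    then have "dyck (rotate (rr w) w)"
      using rr[OF w] by (intro dyck_rotate_at_prefix_min) auto
    then show "x \<in> {..<2 * n} \<times> dyck_paths n"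
      using x w rr[OF w] by (auto simp: rot_def dyck_paths_def updown_words_def)
  qed
  ultimately have "card (updown_words (2 * n) n) \<le> card ({..<2 * n} \<times> dyck_paths n)"
    by (intro card_inj_on_le) (auto simp: finite_dyck_paths)
  then show ?thesis
    by (simp add: card_updown_words card_cartesian_product)
qed

lemma card_dyck_paths_pos:
  assumes "n \<ge> 1"
  shows "card (dyck_paths n) > 0"
proof -
  have "0 < 2 * n choose n"
    by simp
  then show ?thesis
    using central_binomial_le_card_dyck_paths[OF assms] by (cases "card (dyck_paths n) = 0") auto
qed

section \<open>Recolouring an up step\<close>

text \<open>Indices are 0-based: the m-th up step of v is at index up_pos v (m - 1), i.e. at
  position Suc (up_pos v (m - 1)) in the numbering of the weight.\<close>

definition up_pos :: "step list \<Rightarrow> nat \<Rightarrow> nat" where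
  "up_pos v j = (THE k. k < length v \<and> v ! k = U1 \<and> ups (take k v) = j)"

lemma ups_take_strict_mono:
  assumes "k < k'" "k < length v" "v ! k = U1"
  shows "ups (take k v) < ups (take k' v)"
proof -
  have "take k' v = take k v @ take (k' - k) (drop k v)"
    using assms(1) by (metis le_add_diff_inverse less_imp_le take_add)
  moreover have "drop k v = U1 # drop (Suc k) v"
    using assms by (metis Cons_nth_drop_Suc)
  moreover obtain d where "k' - k = Suc d"
    using assms(1) by (metis Suc_diff_Suc)
  ultimately show ?thesis by simp
qed

lemma ex_up_pos: "j < ups v \<Longrightarrow> \<exists>k<length v. v ! k = U1 \<and> ups (take k v) = j"
proof (induction v arbitrary: j)
  case (Cons s v)
  show ?case
  proof (cases "s = U1 \<and> j = 0")
    case True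
    then show ?thesis by (intro exI[of _ 0]) auto
  next
    case False
    define j' where "j' = (if s = U1 then j - 1 else j)"
    have "j' < ups v"
      using Cons.prems False by (auto simp: j'_def split: if_splits)
    then obtain k where "k < length v" "v ! k = U1" "ups (take k v) = j'"
      using Cons.IH by blast
    then show ?thesis using False by (intro exI[of _ "Suc k"]) (auto simp: j'_def)
  qed
qed simp

lemma up_pos_eqI:
  assumes "k < length v" "v ! k = U1" "ups (take k v) = j"
  shows "up_pos v j = k"
  unfolding up_pos_def
proof (rule the_equality)
  fix k' assume k': "k' < length v \<and> v ! k' = U1 \<and> ups (take k' v) = j"
  show "k' = k"
  proof (rule ccontr)
    assume "k' \<noteq> k"
    then show False
      using ups_take_strict_mono[of k' k v] ups_take_strict_mono[of k k' v] k' assms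
      by (auto simp: neq_iff)
  qed
qed (use assms in simp)

lemma up_pos:
  assumes "j < ups v"
  shows "up_pos v j < length v" "v ! up_pos v j = U1" "ups (take (up_pos v j) v) = j"
  using ex_up_pos[OF assms] up_pos_eqI by auto

definition uncolor :: "step \<Rightarrow> step" where
  "uncolor s = (if s = U2 then U1 else s)"

lemma height_map_uncolor [simp]: "height (map uncolor w) = height w"
proof -
  have "delta (uncolor s) = delta s" for s
    by (cases s) (auto simp: uncolor_def)
  then show ?thesis by (induction w) auto
qed

lemma dyck_map_uncolor: "dyck (map uncolor w) \<longleftrightarrow> dyck w"
  by (simp add: dyck_def take_map)

lemma length_filter_is_up: "length (filter is_up w) = ups (map uncolor w)"
proof -
  have "is_up s \<longleftrightarrow> uncolor s = U1" for s
    by (cases s) (auto simp: is_up_def uncolor_def)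
  then show ?thesis by (induction w) auto
qed

lemma map_uncolor_id: "set v \<subseteq> {U1, D} \<Longrightarrow> map uncolor v = v"
  by (induction v) (auto simp: uncolor_def)

lemma recolor_up_step:
  assumes v: "set v \<subseteq> {U1, D}" and k: "k < length v" "v ! k = U1"
  shows "map uncolor (v[k := U2]) = v"
    and "length (filter (\<lambda>s. s = U2) (v[k := U2])) = 1"
    and "weight (v[k := U2]) = Suc k"
    and "length (filter is_up (take (Suc k) (v[k := U2]))) = Suc (ups (take k v))"
proof -
  show "map uncolor (v[k := U2]) = v"
    using k map_uncolor_id[OF v] by (metis list_update_id map_update uncolor_def)
  have split: "v[k := U2] = take k v @ U2 # drop (Suc k) v"
    using k by (simp add: upd_conv_take_nth_drop)
  have "U2 \<notin> set (take k v)" "U2 \<notin> set (drop (Suc k) v)"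
    using v by (auto dest: in_set_takeD in_set_dropD)
  then have "filter (\<lambda>s. s = U2) (take k v) = []" "filter (\<lambda>s. s = U2) (drop (Suc k) v) = []"
    by (auto simp: filter_empty_conv)
  then show "length (filter (\<lambda>s. s = U2) (v[k := U2])) = 1"
    unfolding split by simp
  have "(THE k'. k' < length (v[k := U2]) \<and> v[k := U2] ! k' = U2) = k"
  proof (rule the_equality)
    fix k' assume "k' < length (v[k := U2]) \<and> v[k := U2] ! k' = U2"
    then show "k' = k"
      using v by (cases "k' = k") (auto dest!: nth_mem)
  qed (use k in simp)
  then show "weight (v[k := U2]) = Suc k"
    by (simp add: weight_def)
  have "take (Suc k) (v[k := U2]) = take k v @ [U2]"
    unfolding split using k by (simp add: min_def)
  moreover have "set (take k v) \<subseteq> {U1, D}"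
    using set_take_subset[THEN order_trans, OF v] .
  ultimately show "length (filter is_up (take (Suc k) (v[k := U2]))) = Suc (ups (take k v))"
    using map_uncolor_id[of "take k v"] length_filter_is_up[of "take k v"]
    by (simp add: is_up_def)
qed

lemma eq_recolor_uncolor:
  assumes "length (filter (\<lambda>s. s = U2) w) = 1" "k < length w" "w ! k = U2"
  shows "w = (map uncolor w)[k := U2]"
proof (rule nth_equalityI)
  have "card {i. i < length w \<and> w ! i = U2} = 1"
    using assms(1) by (simp add: length_filter_conv_card)
  then obtain i0 where i0: "{i. i < length w \<and> w ! i = U2} = {i0}"
    by (metis One_nat_def card_1_singleton_iff)
  have "w ! i \<noteq> U2" if "i < length w" "i \<noteq> k" for i
  proof
    assume "w ! i = U2"
    then have "i \<in> {i0}" "k \<in> {i0}"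
      using that assms(2,3) unfolding i0[symmetric] by auto
    then show False using that(2) by simp
  qed
  then show "w ! i = (map uncolor w)[k := U2] ! i" if "i < length w" for i
    using that assms(2,3) by (cases "i = k") (auto simp: uncolor_def)
qed simp

lemma recolor_in_paths:
  assumes m: "1 \<le> m" "m \<le> n" and v_dyck: "v \<in> dyck_paths n"
  shows "v[up_pos v (m - 1) := U2] \<in> paths (2 * n) m"
proof -
  have sv: "set v \<subseteq> {U1, D}" and "length v = 2 * n" "dyck v"
    using v_dyck by (auto simp: dyck_paths_def)
  have "m - 1 < ups v"
    using m ups_dyck_path[OF v_dyck] by simp
  note pos = up_pos[OF this] and recolor = recolor_up_step[OF sv up_pos(1,2)[OF this]]
  have "dyck (v[up_pos v (m - 1) := U2])"
    using recolor(1) \<open>dyck v\<close> dyck_map_uncolor by metis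
  moreover have "set (v[up_pos v (m - 1) := U2]) \<subseteq> {U1, U2, D}"
    using sv by (auto dest!: set_update_subset_insert[THEN subsetD])
  ultimately show ?thesis
    unfolding paths_def using recolor(2,4) pos \<open>length v = 2 * n\<close> m
    by (auto intro!: exI[of _ "up_pos v (m - 1)"])
qed

lemma paths_iff_recolor:
  "w \<in> paths (2 * n) m \<longleftrightarrow>
     1 \<le> m \<and> m \<le> n \<and> (\<exists>v\<in>dyck_paths n. w = v[up_pos v (m - 1) := U2])"
proof
  assume w: "w \<in> paths (2 * n) m"
  define v where "v = map uncolor w"
  have sv: "set v \<subseteq> {U1, D}"
    by (auto simp: v_def uncolor_def) (metis step.exhaust)
  have v_dyck: "v \<in> dyck_paths n"
    using w sv by (auto simp: paths_def dyck_paths_def v_def dyck_map_uncolor)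
  obtain k where k: "k < length w" "w ! k = U2" "length (filter is_up (take (Suc k) w)) = m"
    using w by (auto simp: paths_def)
  have w_eq: "w = v[k := U2]"
    unfolding v_def using w k by (intro eq_recolor_uncolor) (auto simp: paths_def)
  have vk: "k < length v" "v ! k = U1"
    using k by (auto simp: v_def uncolor_def)
  have m: "m = Suc (ups (take k v))"
    using recolor_up_step(4)[OF sv vk] w_eq k(3) by simp
  have "ups (take k v) < n"
    using ups_take_strict_mono[of k "length v" v] vk ups_dyck_path[OF v_dyck] by simp
  moreover have "up_pos v (m - 1) = k"
    using m vk by (intro up_pos_eqI) auto
  ultimately show "1 \<le> m \<and> m \<le> n \<and> (\<exists>v\<in>dyck_paths n. w = v[up_pos v (m - 1) := U2])"
    using m v_dyck w_eq by (auto intro!: bexI[of _ v])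
qed (use recolor_in_paths in blast)

lemma g_double:
  "g (2 * n) m = (if 1 \<le> m \<and> m \<le> n then (\<Sum>v\<in>dyck_paths n. Suc (up_pos v (m - 1))) else 0)"
proof (cases "1 \<le> m \<and> m \<le> n")
  case True
  let ?recolor = "\<lambda>v. v[up_pos v (m - 1) := U2]"
  have facts: "set v \<subseteq> {U1, D}" "up_pos v (m - 1) < length v" "v ! up_pos v (m - 1) = U1"
    if "v \<in> dyck_paths n" for v
    using up_pos[of "m - 1" v] ups_dyck_path[OF that] True that by (auto simp: dyck_paths_def)
  have "inj_on ?recolor (dyck_paths n)"
  proof (rule inj_onI)
    fix v v' assume "v \<in> dyck_paths n" "v' \<in> dyck_paths n" "?recolor v = ?recolor v'"
    then show "v = v'"
      using recolor_up_step(1)[OF facts[of v]] recolor_up_step(1)[OF facts[of v']] by metis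
  qed
  moreover have "paths (2 * n) m = ?recolor ` dyck_paths n"
    using True paths_iff_recolor by blast
  ultimately have "g (2 * n) m = (\<Sum>v\<in>dyck_paths n. weight (?recolor v))"
    by (simp add: g_def sum.reindex)
  also have "\<dots> = (\<Sum>v\<in>dyck_paths n. Suc (up_pos v (m - 1)))"
    using facts recolor_up_step(3) by (intro sum.cong) auto
  finally show ?thesis using True by simp
next
  case False
  then have "paths (2 * n) m = {}"
    using paths_iff_recolor by blast
  then show ?thesis using False by (simp only: g_def if_False sum.empty)
qed

section \<open>Heights of up steps\<close>

definition up_height :: "step list \<Rightarrow> nat \<Rightarrow> int" where
  "up_height v j = height (take (up_pos v j) v)"

definition height_sum :: "nat \<Rightarrow> nat \<Rightarrow> int" where
  "height_sum n M = (\<Sum>v\<in>dyck_paths n. \<Sum>j<M. up_height v j)"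

lemma height_take_nonneg: "dyck w \<Longrightarrow> 0 \<le> height (take k w)"
  by (cases "k \<le> length w") (auto simp: dyck_def)

lemma up_height_nonneg: "v \<in> dyck_paths n \<Longrightarrow> 0 \<le> up_height v j"
  by (simp add: up_height_def dyck_paths_def height_take_nonneg)

lemma up_pos_dyck_path:
  assumes "v \<in> dyck_paths n" "j < n"
  shows "up_pos v j < 2 * n" "ups (take (up_pos v j) v) = j"
  using up_pos[of j v] assms ups_dyck_path[OF assms(1)] by (auto simp: dyck_paths_def)

lemma set_take_dyck_path: "v \<in> dyck_paths n \<Longrightarrow> set (take k v) \<subseteq> {U1, D}"
  using set_take_subset[of k v] by (auto simp: dyck_paths_def)

lemma up_height_le:
  assumes "v \<in> dyck_paths n" "j < n"
  shows "up_height v j \<le> int j"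
proof -
  have "up_height v j \<le> int (ups (take (up_pos v j) v))"
    unfolding up_height_def by (rule height_le_ups[OF set_take_dyck_path[OF assms(1)]])
  then show ?thesis using up_pos_dyck_path(2)[OF assms] by simp
qed

lemma Suc_up_pos_eq:
  assumes "v \<in> dyck_paths n" "j < n"
  shows "int (Suc (up_pos v j)) = 2 * int j + 1 - up_height v j"
  using height_eq_ups[OF set_take_dyck_path[OF assms(1)]] up_pos_dyck_path[OF assms] assms(1)
  by (simp add: up_height_def dyck_paths_def)

lemma sum_g_atMost:
  assumes "M \<le> n"
  shows "int (\<Sum>m\<le>M. g (2 * n) m) = int M ^ 2 * int (card (dyck_paths n)) - height_sum n M"
proof -
  have odd_sum: "(\<Sum>j<M. 2 * int j + 1) = int M ^ 2"
    by (induction M) (auto simp: power2_eq_square algebra_simps)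
  have "(\<Sum>m\<le>M. g (2 * n) m) = g (2 * n) 0 + (\<Sum>j<M. g (2 * n) (Suc j))"
    unfolding lessThan_Suc_atMost[symmetric] by (rule sum.lessThan_Suc_shift)
  also have "\<dots> = (\<Sum>j<M. g (2 * n) (Suc j))"
    by (simp add: g_double[of n 0])
  also have "\<dots> = (\<Sum>j<M. \<Sum>v\<in>dyck_paths n. Suc (up_pos v j))"
    using assms by (intro sum.cong) (auto simp: g_double)
  finally have "int (\<Sum>m\<le>M. g (2 * n) m) = (\<Sum>v\<in>dyck_paths n. \<Sum>j<M. int (Suc (up_pos v j)))"
    by (simp add: sum.swap[of _ "{..<M}"] del: of_nat_Suc)
  also have "\<dots> = (\<Sum>v\<in>dyck_paths n. \<Sum>j<M. 2 * int j + 1 - up_height v j)"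
    using assms Suc_up_pos_eq by (intro sum.cong) auto
  also have "\<dots> = int M ^ 2 * int (card (dyck_paths n)) - height_sum n M"
    by (simp add: sum_subtractf odd_sum height_sum_def)
  finally show ?thesis .
qed

lemma Gtot_double: "Gtot (2 * n) = (\<Sum>m\<le>n. g (2 * n) m)"
proof -
  have "(\<Sum>m\<le>2 * n. g (2 * n) m) = (\<Sum>m\<le>n. g (2 * n) m)"
    by (rule sum.mono_neutral_right) (auto simp: g_double)
  then show ?thesis by (simp add: Gtot_def)
qed

lemma height_sum_nonneg: "0 \<le> height_sum n M"
  unfolding height_sum_def by (intro sum_nonneg) (simp add: up_height_nonneg)

lemma height_sum_mono: "M \<le> M' \<Longrightarrow> height_sum n M \<le> height_sum n M'"
  unfolding height_sum_def by (intro sum_mono sum_mono2) (auto simp: up_height_nonneg)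

definition tall_paths :: "nat \<Rightarrow> nat \<Rightarrow> step list set" where
  "tall_paths n k = {v\<in>dyck_paths n. \<exists>t\<le>2 * n. int k \<le> height (take t v)}"

lemma height_sum_le:
  "height_sum n n \<le> int n * int k * int (card (dyck_paths n))
                      + int n * int n * int (card (tall_paths n k))"
proof -
  let ?tall = "\<lambda>v. \<exists>t\<le>2 * n. int k \<le> height (take t v)"
  have "(\<Sum>j<n. up_height v j) \<le> int n * int k + (if ?tall v then int n * int n else 0)"
    if v: "v \<in> dyck_paths n" for v
  proof (cases "?tall v")
    case True
    have "(\<Sum>j<n. up_height v j) \<le> (\<Sum>j<n. int n)"
      using up_height_le[OF v] by (intro sum_mono) force
    then have "(\<Sum>j<n. up_height v j) \<le> int n * int n"
      by simp
    then show ?thesis using True by (simp add: add_increasing)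
  next
    case False
    have "up_height v j \<le> int k" if "j < n" for j
    proof -
      have "\<not> int k \<le> height (take (up_pos v j) v)"
        using False up_pos_dyck_path(1)[OF v that] by auto
      then show ?thesis unfolding up_height_def by simp
    qed
    then have "(\<Sum>j<n. up_height v j) \<le> (\<Sum>j<n. int k)"
      by (intro sum_mono) auto
    then show ?thesis by (simp only: if_not_P[OF False]) simp
  qed
  then have "height_sum n n
      \<le> (\<Sum>v\<in>dyck_paths n. int n * int k + (if ?tall v then int n * int n else 0))"
    unfolding height_sum_def by (intro sum_mono)
  also have "\<dots> = int n * int k * int (card (dyck_paths n))
                    + int n * int n * int (card (tall_paths n k))"
    by (simp add: sum.distrib tall_paths_def sum.inter_filter[symmetric] finite_dyck_paths)
  finally show ?thesis .
qed

section \<open>Tall Dyck paths are rare\<close>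

lemma binomial_mult_le_binomial_add:
  assumes "i \<le> k"
  shows "(a choose i) * (b choose (k - i)) \<le> (a + b) choose k"
proof -
  have "(a choose i) * (b choose (k - i)) \<le> (\<Sum>i'\<le>k. (a choose i') * (b choose (k - i')))"
    using assms by (intro member_le_sum) auto
  also have "\<dots> = (a + b) choose k"
    by (rule vandermonde)
  finally show ?thesis .
qed

lemma card_prefix_height_le:
  assumes "t \<le> L"
  shows "card {v\<in>updown_words L c. height (take t v) = int j}
           \<le> (t choose ((t + j) div 2)) * ((L - t) choose (c - (t + j) div 2))"
proof -
  let ?S = "{v\<in>updown_words L c. height (take t v) = int j}"
  let ?u = "(t + j) div 2"
  have split: "take t v \<in> updown_words t ?u \<and> drop t v \<in> updown_words (L - t) (c - ?u)"
    if v: "v \<in> ?S" for v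
  proof -
    have sv: "set v \<subseteq> {U1, D}" "length v = L" "ups v = c" "height (take t v) = int j"
      using v by (auto simp: updown_words_def)
    have "height (take t v) = 2 * int (ups (take t v)) - int t"
      using height_eq_ups[OF set_take_subset[THEN order_trans, OF sv(1)]] sv(2) assms by simp
    then have "2 * ups (take t v) = t + j"
      using sv(4) by linarith
    then have "ups (take t v) = ?u"
      by presburger
    moreover have "ups (drop t v) = c - ups (take t v)"
      using sv(3) ups_append[of "take t v" "drop t v"] by simp
    ultimately show ?thesis
      using sv assms set_take_subset[of t v] set_drop_subset[of t v]
      by (auto simp: updown_words_def)
  qed
  have "inj_on (\<lambda>v. (take t v, drop t v)) ?S"
    by (rule inj_onI) (metis append_take_drop_id prod.inject)
  moreover have "(\<lambda>v. (take t v, drop t v)) ` ?S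
                   \<subseteq> updown_words t ?u \<times> updown_words (L - t) (c - ?u)"
    using split by auto
  ultimately have "card ?S \<le> card (updown_words t ?u \<times> updown_words (L - t) (c - ?u))"
    by (intro card_inj_on_le) (auto simp: finite_updown_words)
  then show ?thesis
    by (simp add: card_cartesian_product card_updown_words)
qed

lemma card_updown_words_through_height:
  assumes "t \<le> 2 * n"
  shows "card {v\<in>updown_words (2 * n) n. height (take t v) = int j} \<le> 2 * n choose (n - j)"
proof (cases "{v\<in>updown_words (2 * n) n. height (take t v) = int j} = {}")
  case False
  then obtain v where v: "v \<in> updown_words (2 * n) n" "height (take t v) = int j"
    by blast
  let ?u = "(t + j) div 2"
  have sv: "set (take t v) \<subseteq> {U1, D}" "length (take t v) = t"
    using v assms set_take_subset[of t v] by (auto simp: updown_words_def)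
  have "2 * ups (take t v) = t + j"
    using height_eq_ups[OF sv(1)] sv(2) v(2) by linarith
  moreover have "j \<le> ups (take t v)"
    using height_le_ups[OF sv(1)] v(2) by linarith
  moreover have "ups (take t v) \<le> n"
    using ups_take_le[of t v] v(1) by (simp add: updown_words_def)
  ultimately have u: "2 * ?u = t + j" "j \<le> ?u" "?u \<le> n"
    by presburger+
  have "card {v\<in>updown_words (2 * n) n. height (take t v) = int j}
          \<le> (t choose ?u) * ((2 * n - t) choose (n - ?u))"
    by (rule card_prefix_height_le[OF assms])
  also have "\<dots> = (t choose (t - ?u)) * ((2 * n - t) choose ((n - j) - (t - ?u)))"
  proof -
    have "?u \<le> t" "(n - j) - (t - ?u) = n - ?u"
      using u by linarith+
    then show ?thesis
      by (simp add: binomial_symmetric[of ?u t])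
  qed
  also have "\<dots> \<le> (t + (2 * n - t)) choose (n - j)"
    using u by (intro binomial_mult_le_binomial_add) linarith
  finally show ?thesis
    using assms by simp
qed (metis card.empty zero_le)

lemma binomial_central_pred:
  assumes "j < n"
  shows "real (2 * n choose (n - Suc j))
           = real (n - j) / real (n + j + 1) * real (2 * n choose (n - j))"
proof -
  have "Suc (n - Suc j) * (2 * n choose Suc (n - Suc j)) = 2 * n * ((2 * n - 1) choose (n - Suc j))"
    by (rule binomial_absorption)
  moreover have "(2 * n - (n - Suc j)) * (2 * n choose (n - Suc j))
                   = 2 * n * ((2 * n - 1) choose (n - Suc j))"
    by (rule binomial_absorb_comp)
  moreover have "Suc (n - Suc j) = n - j" "2 * n - (n - Suc j) = n + j + 1"
    using assms by auto
  ultimately have "real (n + j + 1) * real (2 * n choose (n - Suc j))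
                     = real (n - j) * real (2 * n choose (n - j))"
    by (metis of_nat_mult)
  moreover have "real (n + j + 1) > 0"
    by simp
  ultimately show ?thesis
    by (simp add: field_simps)
qed

lemma pred_ratio_le_exp:
  assumes "j < n"
  shows "real (n - j) / real (n + j + 1) \<le> exp (- ((2 * real j + 1) / (2 * real n)))"
proof -
  have "(2 * real j + 1) * (real j + 1) \<le> (2 * real j + 1) * real n"
    using assms by (intro mult_left_mono) auto
  then have "real (n - j) / real (n + j + 1) \<le> 1 + - ((2 * real j + 1) / (2 * real n))"
    using assms by (simp add: field_simps of_nat_diff)
  also have "\<dots> \<le> exp (- ((2 * real j + 1) / (2 * real n)))"
    by (rule exp_ge_add_one_self)
  finally show ?thesis .
qed

lemma binomial_central_shift_le:
  assumes "n \<ge> 1" "j \<le> n"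
  shows "real (2 * n choose (n - j)) \<le> real (2 * n choose n) * exp (- (real j ^ 2) / (2 * real n))"
  using assms(2)
proof (induction j)
  case (Suc j)
  then have "j < n"
    by simp
  have "real (2 * n choose (n - Suc j))
          = real (n - j) / real (n + j + 1) * real (2 * n choose (n - j))"
    by (rule binomial_central_pred[OF \<open>j < n\<close>])
  also have "\<dots> \<le> exp (- ((2 * real j + 1) / (2 * real n)))
                  * (real (2 * n choose n) * exp (- (real j ^ 2) / (2 * real n)))"
    using Suc.IH \<open>j < n\<close> by (intro mult_mono pred_ratio_le_exp) auto
  also have "\<dots> = real (2 * n choose n) * exp (- (real (Suc j) ^ 2) / (2 * real n))"
  proof -
    have "- ((2 * real j + 1) / (2 * real n)) + - (real j ^ 2) / (2 * real n)
            = - (real (Suc j) ^ 2) / (2 * real n)"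
      using assms(1) by (simp add: field_simps power2_eq_square)
    then show ?thesis
      by (simp add: exp_add[symmetric] mult_ac)
  qed
  finally show ?case .
qed simp

lemma tall_paths_subset:
  "tall_paths n k \<subseteq>
     (\<Union>t\<in>{..2 * n}. \<Union>j\<in>{k..n}. {v\<in>updown_words (2 * n) n. height (take t v) = int j})"
proof
  fix v assume "v \<in> tall_paths n k"
  then obtain t where v: "v \<in> dyck_paths n" and t: "t \<le> 2 * n"
    and h: "int k \<le> height (take t v)"
    by (auto simp: tall_paths_def)
  have "height (take t v) \<le> int n"
    using height_le_ups[OF set_take_dyck_path[OF v, of t]] ups_take_le[of t v] ups_dyck_path[OF v]
    by simp
  then have "v \<in> {v\<in>updown_words (2 * n) n. height (take t v) = int (nat (height (take t v)))}"
    "nat (height (take t v)) \<in> {k..n}"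
    using h v dyck_paths_subset_updown_words by auto
  with t show "v \<in> (\<Union>t\<in>{..2 * n}. \<Union>j\<in>{k..n}.
                        {v\<in>updown_words (2 * n) n. height (take t v) = int j})"
    by blast
qed

lemma card_tall_paths_le:
  assumes n: "n \<ge> 1"
  shows "real (card (tall_paths n k))
           \<le> real (2 * n + 1) * real (n + 1) * real (2 * n choose n)
               * exp (- (real k ^ 2) / (2 * real n))"
proof -
  let ?S = "\<lambda>t j. {v\<in>updown_words (2 * n) n. height (take t v) = int j}"
  let ?E = "exp (- (real k ^ 2) / (2 * real n))"
  have "card (tall_paths n k) \<le> card (\<Union>t\<in>{..2 * n}. \<Union>j\<in>{k..n}. ?S t j)"
    using tall_paths_subset by (intro card_mono) (auto simp: finite_updown_words)
  also have "\<dots> \<le> (\<Sum>t\<le>2 * n. \<Sum>j\<in>{k..n}. card (?S t j))"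
    by (intro card_UN_le[THEN order_trans] sum_mono card_UN_le) auto
  finally have "real (card (tall_paths n k)) \<le> (\<Sum>t\<le>2 * n. \<Sum>j\<in>{k..n}. real (card (?S t j)))"
    by (simp only: of_nat_sum[symmetric] of_nat_le_iff)
  also have "\<dots> \<le> (\<Sum>t\<le>2 * n. \<Sum>j\<in>{k..n}. real (2 * n choose n) * ?E)"
  proof (intro sum_mono)
    fix t j assume t: "t \<in> {..2 * n}" and j: "j \<in> {k..n}"
    have "real (card (?S t j)) \<le> real (2 * n choose (n - j))"
      using card_updown_words_through_height[of t n j] t by simp
    also have "\<dots> \<le> real (2 * n choose n) * exp (- (real j ^ 2) / (2 * real n))"
      using binomial_central_shift_le[OF n, of j] j by simp
    also have "\<dots> \<le> real (2 * n choose n) * ?E"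
      using j n by (intro mult_left_mono) (auto simp: divide_right_mono)
    finally show "real (card (?S t j)) \<le> real (2 * n choose n) * ?E" .
  qed
  also have "\<dots> = real (2 * n + 1) * real (n + 1 - k) * real (2 * n choose n) * ?E"
    by simp
  also have "\<dots> \<le> real (2 * n + 1) * real (n + 1) * real (2 * n choose n) * ?E"
    by (intro mult_right_mono mult_left_mono) auto
  finally show ?thesis .
qed

definition height_ratio :: "nat \<Rightarrow> nat \<Rightarrow> real" where
  "height_ratio n M = real_of_int (height_sum n M) / (real n ^ 2 * real (card (dyck_paths n)))"

lemma height_ratio_nonneg: "0 \<le> height_ratio n M"
  by (simp add: height_ratio_def height_sum_nonneg)

lemma height_ratio_mono: "M \<le> M' \<Longrightarrow> height_ratio n M \<le> height_ratio n M'"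
  unfolding height_ratio_def by (intro divide_right_mono) (simp_all add: height_sum_mono)

lemma height_ratio_le:
  assumes n: "n \<ge> 1"
  shows "height_ratio n n
           \<le> real k / real n
               + 2 * real n * (2 * real n + 1) * (real n + 1) * exp (- (real k ^ 2) / (2 * real n))"
proof -
  let ?E = "exp (- (real k ^ 2) / (2 * real n))"
  let ?C = "real (card (dyck_paths n))"
  have C: "?C > 0"
    using card_dyck_paths_pos[OF n] by simp
  have "real_of_int (height_sum n n)
          \<le> real_of_int (int n * int k * int (card (dyck_paths n))
                           + int n * int n * int (card (tall_paths n k)))"
    using height_sum_le[of n k] by (simp only: of_int_le_iff)
  also have "\<dots> = real n * real k * ?C + real n * real n * real (card (tall_paths n k))"
    by simp
  also have "\<dots> \<le> real n * real k * ?C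
                   + real n * real n * (real (2 * n + 1) * real (n + 1) * (2 * real n * ?C) * ?E)"
  proof -
    have "real (2 * n choose n) \<le> 2 * real n * ?C"
      using central_binomial_le_card_dyck_paths[OF n]
      by (metis of_nat_le_iff of_nat_mult of_nat_numeral)
    then have "real (card (tall_paths n k))
                 \<le> real (2 * n + 1) * real (n + 1) * (2 * real n * ?C) * ?E"
      using card_tall_paths_le[OF n, of k]
      by (elim order_trans) (intro mult_right_mono mult_left_mono, auto)
    then show ?thesis
      by (intro add_left_mono mult_left_mono) auto
  qed
  also have "\<dots> = (real n ^ 2 * ?C)
                     * (real k / real n + 2 * real n * (2 * real n + 1) * (real n + 1) * ?E)"
    using n by (simp add: field_simps power2_eq_square)
  finally show ?thesis
    using n C by (simp add: height_ratio_def pos_divide_le_eq mult.commute)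
qed

lemma height_ratio_le_eps:
  assumes n: "n \<ge> 1" and eps: "eps > 0"
  shows "height_ratio n n
           \<le> eps + (1 / real n
                      + 2 * real n * (2 * real n + 1) * (real n + 1) * exp (- (eps ^ 2 / 2) * real n))"
proof -
  define k where "k = nat \<lceil>eps * real n\<rceil>"
  have "real k = real_of_int \<lceil>eps * real n\<rceil>"
    unfolding k_def using eps by simp
  then have k: "eps * real n \<le> real k" "real k \<le> eps * real n + 1"
    using le_of_int_ceiling of_int_ceiling_le_add_one by simp_all
  have "real k / real n \<le> eps + 1 / real n"
    using k(2) n by (simp add: field_simps)
  moreover have "exp (- (real k ^ 2) / (2 * real n)) \<le> exp (- (eps ^ 2 / 2) * real n)"
  proof -
    have "(eps * real n) ^ 2 \<le> real k ^ 2"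
      using k(1) eps by (intro power_mono) auto
    then show ?thesis
      using n by (simp add: field_simps power2_eq_square)
  qed
  then have "2 * real n * (2 * real n + 1) * (real n + 1) * exp (- (real k ^ 2) / (2 * real n))
               \<le> 2 * real n * (2 * real n + 1) * (real n + 1) * exp (- (eps ^ 2 / 2) * real n)"
    by (intro mult_left_mono) auto
  ultimately show ?thesis
    using height_ratio_le[OF n, of k] by linarith
qed

lemma height_ratio_tendsto_zero: "(\<lambda>n. height_ratio n n) \<longlonglongrightarrow> 0"
proof (rule tendstoI)
  fix e :: real assume e: "0 < e"
  have "(\<lambda>n. 1 / real n
              + 2 * real n * (2 * real n + 1) * (real n + 1) * exp (- ((e / 2) ^ 2 / 2) * real n))
          \<longlonglongrightarrow> 0"
    using e by real_asymp
  then have "\<forall>\<^sub>F n in sequentially.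
      1 / real n + 2 * real n * (2 * real n + 1) * (real n + 1) * exp (- ((e / 2) ^ 2 / 2) * real n)
        < e / 2"
    using e by (intro order_tendstoD) auto
  moreover have "\<forall>\<^sub>F n in sequentially. n \<ge> 1"
    by (rule eventually_ge_at_top)
  ultimately show "\<forall>\<^sub>F n in sequentially. dist (height_ratio n n) 0 < e"
  proof eventually_elim
    case (elim n)
    then show ?case
      using height_ratio_le_eps[of n "e / 2"] height_ratio_nonneg[of n n] e by simp
  qed
qed

section \<open>The law of \<open>X\<^sub>n / n\<close>\<close>

lemma Gtot_double_pos:
  assumes "n \<ge> 1"
  shows "Gtot (2 * n) > 0"
proof -
  have "0 < card (dyck_paths n)"
    using card_dyck_paths_pos[OF assms] .
  also have "\<dots> \<le> (\<Sum>v\<in>dyck_paths n. Suc (up_pos v 0))"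
    unfolding card_eq_sum by (rule sum_mono) simp
  also have "\<dots> = g (2 * n) 1"
    using assms by (simp add: g_double)
  also have "\<dots> \<le> Gtot (2 * n)"
    unfolding Gtot_double using assms by (intro member_le_sum) auto
  finally show ?thesis .
qed

lemma probX_eq_0: "n < m \<Longrightarrow> probX n m = 0"
  by (simp add: probX_def g_double)

lemma probX_nonneg: "0 \<le> probX n m"
  by (simp add: probX_def)

lemma sum_probX:
  assumes "n \<ge> 1"
  shows "(\<Sum>m\<le>n. probX n m) = 1"
proof -
  have "(\<Sum>m\<le>n. probX n m) = real (Gtot (2 * n)) / real (Gtot (2 * n))"
    unfolding Gtot_double probX_def sum_divide_distrib[symmetric] by simp
  then show ?thesis
    using Gtot_double_pos[OF assms] by simp
qed

lemma emeasure_law_scaled: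
  assumes n: "n \<ge> 1" and A: "A \<in> sets borel"
  shows "emeasure (law_scaled n) A = ennreal (\<Sum>m\<in>{m. m \<le> n \<and> real m / real n \<in> A}. probX n m)"
proof -
  let ?scale = "\<lambda>m::nat. real m / real n"
  have "emeasure (law_scaled n) A
          = emeasure (density (count_space UNIV) (\<lambda>m. ennreal (probX n m))) (?scale -` A)"
    unfolding law_scaled_def using A by (subst emeasure_distr) auto
  also have "\<dots> = (\<integral>\<^sup>+ m. ennreal (probX n m) * indicator (?scale -` A) m \<partial>count_space UNIV)"
    by (subst emeasure_density) auto
  also have "\<dots> = (\<Sum>m\<le>n. ennreal (probX n m) * indicator (?scale -` A) m)"
    by (rule nn_integral_count_space') (auto simp: probX_eq_0)
  also have "\<dots> = (\<Sum>m\<in>{m. m \<le> n \<and> ?scale m \<in> A}. ennreal (probX n m))"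
  proof -
    have "{m. m \<le> n \<and> ?scale m \<in> A} = {..n} \<inter> {m. ?scale m \<in> A}"
      by auto
    then show ?thesis
      by (simp add: sum.inter_restrict indicator_def if_distrib cong: if_cong)
  qed
  also have "\<dots> = ennreal (\<Sum>m\<in>{m. m \<le> n \<and> ?scale m \<in> A}. probX n m)"
    by (rule sum_ennreal) (simp add: probX_nonneg)
  finally show ?thesis .
qed

lemma prob_space_law_scaled: "n \<ge> 1 \<Longrightarrow> prob_space (law_scaled n)"
proof (rule prob_spaceI)
  assume n: "n \<ge> 1"
  have "{m. m \<le> n \<and> real m / real n \<in> (UNIV :: real set)} = {..n}"
    by auto
  then show "emeasure (law_scaled n) (space (law_scaled n)) = 1"
    using emeasure_law_scaled[OF n, of UNIV] sum_probX[OF n] by (simp add: law_scaled_def)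
qed

lemma real_distribution_law_scaled: "n \<ge> 1 \<Longrightarrow> real_distribution (law_scaled n)"
  using prob_space_law_scaled
  by (simp add: real_distribution_def real_distribution_axioms_def law_scaled_def)

lemma cdf_law_scaled:
  assumes "n \<ge> 1"
  shows "cdf (law_scaled n) x = (\<Sum>m\<in>{m. m \<le> n \<and> real m / real n \<le> x}. probX n m)"
  using emeasure_law_scaled[OF assms, of "{..x}"]
  by (simp add: cdf_def measure_def sum_nonneg probX_nonneg)

lemma sum_probX_atMost:
  assumes N: "N \<ge> 1" and M: "M \<le> N"
  shows "(\<Sum>m\<le>M. probX N m)
           = ((real M / real N) ^ 2 - height_ratio N M) / (1 - height_ratio N N)"
proof -
  let ?C = "real (card (dyck_paths N))"
  have C: "?C > 0"
    using card_dyck_paths_pos[OF N] by simp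
  have num: "real (\<Sum>m\<le>M. g (2 * N) m) = real M ^ 2 * ?C - real_of_int (height_sum N M)"
    using arg_cong[OF sum_g_atMost[OF M], of real_of_int] by simp
  have den: "real (Gtot (2 * N)) = real N ^ 2 * ?C - real_of_int (height_sum N N)"
    using arg_cong[OF sum_g_atMost[of N N], of real_of_int] by (simp add: Gtot_double)
  have "(\<Sum>m\<le>M. probX N m) = real (\<Sum>m\<le>M. g (2 * N) m) / real (Gtot (2 * N))"
    unfolding probX_def sum_divide_distrib[symmetric] by simp
  also have "\<dots> = (real M ^ 2 * ?C - real_of_int (height_sum N M))
                   / (real N ^ 2 * ?C - real_of_int (height_sum N N))"
    by (simp only: num den)
  also have "\<dots> = ((real M ^ 2 * ?C - real_of_int (height_sum N M)) / (real N ^ 2 * ?C))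
                   / ((real N ^ 2 * ?C - real_of_int (height_sum N N)) / (real N ^ 2 * ?C))"
    using N C by simp
  also have "\<dots> = ((real M / real N) ^ 2 - height_ratio N M) / (1 - height_ratio N N)"
    using N C by (simp add: height_ratio_def diff_divide_distrib power_divide)
  finally show ?thesis .
qed

lemma cdf_law_scaled_neg:
  assumes "n \<ge> 1" "x < 0"
  shows "cdf (law_scaled n) x = 0"
proof -
  have empty: "{m. m \<le> n \<and> real m / real n \<le> x} = {}"
    using assms(2) by (auto simp: not_le intro: order.strict_trans2[OF _ divide_nonneg_nonneg])
  show ?thesis
    using cdf_law_scaled[OF assms(1), of x] unfolding empty by simp
qed

lemma cdf_law_scaled_nonneg:
  assumes n: "n \<ge> 1" and x: "0 \<le> x"
  defines "M \<equiv> min n (nat \<lfloor>x * real n\<rfloor>)"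
  shows "cdf (law_scaled n) x = ((real M / real n) ^ 2 - height_ratio n M) / (1 - height_ratio n n)"
proof -
  have "{m. m \<le> n \<and> real m / real n \<le> x} = {..M}"
  proof (intro set_eqI)
    fix m
    have "real m / real n \<le> x \<longleftrightarrow> int m \<le> \<lfloor>x * real n\<rfloor>"
      using n by (simp add: divide_le_eq le_floor_iff mult.commute)
    then show "m \<in> {m. m \<le> n \<and> real m / real n \<le> x} \<longleftrightarrow> m \<in> {..M}"
      using x by (auto simp: M_def le_nat_iff)
  qed
  then show ?thesis
    using cdf_law_scaled[OF n, of x] sum_probX_atMost[OF n, of M] by (simp add: M_def)
qed

lemma floor_scaled_tendsto:
  assumes "0 \<le> x"
  shows "(\<lambda>n. real (nat \<lfloor>x * real (Suc n)\<rfloor>) / real (Suc n)) \<longlonglongrightarrow> x"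
proof (rule tendsto_sandwich[of "\<lambda>n. x - 1 / real (Suc n)" _ _ "\<lambda>n. x"])
  have floor: "real (nat \<lfloor>x * real (Suc n)\<rfloor>) = real_of_int \<lfloor>x * real (Suc n)\<rfloor>" for n
    using assms by simp
  show "\<forall>\<^sub>F n in sequentially. x - 1 / real (Suc n) \<le> real (nat \<lfloor>x * real (Suc n)\<rfloor>) / real (Suc n)"
  proof (intro always_eventually allI)
    fix n
    have "x * real (Suc n) - 1 \<le> real_of_int \<lfloor>x * real (Suc n)\<rfloor>"
      by linarith
    then have "(x * real (Suc n) - 1) / real (Suc n)
                 \<le> real_of_int \<lfloor>x * real (Suc n)\<rfloor> / real (Suc n)"
      by (intro divide_right_mono) auto
    then show "x - 1 / real (Suc n) \<le> real (nat \<lfloor>x * real (Suc n)\<rfloor>) / real (Suc n)"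
      unfolding floor by (simp add: diff_divide_distrib)
  qed
  show "\<forall>\<^sub>F n in sequentially. real (nat \<lfloor>x * real (Suc n)\<rfloor>) / real (Suc n) \<le> x"
    unfolding floor by (intro always_eventually allI) (simp add: divide_le_eq)
  show "(\<lambda>n. x - 1 / real (Suc n)) \<longlonglongrightarrow> x"
    by real_asymp
qed simp

lemma floor_scaled_min_tendsto:
  assumes "0 \<le> x"
  shows "(\<lambda>n. real (min (Suc n) (nat \<lfloor>x * real (Suc n)\<rfloor>)) / real (Suc n)) \<longlonglongrightarrow> min 1 x"
proof -
  have "(\<lambda>n. real (min (Suc n) (nat \<lfloor>x * real (Suc n)\<rfloor>)) / real (Suc n))
          = (\<lambda>n. min 1 (real (nat \<lfloor>x * real (Suc n)\<rfloor>) / real (Suc n)))"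
    by (simp add: of_nat_min min_divide_distrib_right del: of_nat_Suc)
  moreover have "(\<lambda>n. min 1 (real (nat \<lfloor>x * real (Suc n)\<rfloor>) / real (Suc n))) \<longlonglongrightarrow> min 1 x"
    using assms by (intro tendsto_min tendsto_const floor_scaled_tendsto)
  ultimately show ?thesis
    by (simp only:)
qed

text \<open>Both laws live on [0, 1], where the unbounded moment function x ^ r agrees with the
  bounded continuous unit_clamp x ^ r; this turns weak convergence into moment convergence.\<close>

definition unit_clamp :: "real \<Rightarrow> real" where
  "unit_clamp x = max 0 (min 1 x)"

lemma integral_law_scaled_power:
  assumes n: "n \<ge> 1"
  shows "integral\<^sup>L (law_scaled n) (\<lambda>x. x ^ r) = integral\<^sup>L (law_scaled n) (\<lambda>x. unit_clamp x ^ r)"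
proof -
  let ?P = "density (count_space UNIV) (\<lambda>m. ennreal (probX n m))"
  have clamp: "probX n m * (real m / real n) ^ r = probX n m * unit_clamp (real m / real n) ^ r"
    for m
  proof (cases "m \<le> n")
    case True
    then have "unit_clamp (real m / real n) = real m / real n"
      using n by (simp add: unit_clamp_def divide_le_eq_1)
    then show ?thesis by simp
  qed (simp add: probX_eq_0)
  have "integral\<^sup>L (law_scaled n) (\<lambda>x. x ^ r) = integral\<^sup>L ?P (\<lambda>m. (real m / real n) ^ r)"
    unfolding law_scaled_def by (subst integral_distr) auto
  also have "\<dots> = integral\<^sup>L (count_space UNIV) (\<lambda>m. probX n m * (real m / real n) ^ r)"
    by (subst integral_density) (auto simp: probX_nonneg)
  also have "\<dots> = integral\<^sup>L (count_space UNIV) (\<lambda>m. probX n m * unit_clamp (real m / real n) ^ r)"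
    by (simp only: clamp)
  also have "\<dots> = integral\<^sup>L ?P (\<lambda>m. unit_clamp (real m / real n) ^ r)"
    by (subst integral_density) (auto simp: probX_nonneg)
  also have "\<dots> = integral\<^sup>L (law_scaled n) (\<lambda>x. unit_clamp x ^ r)"
    unfolding law_scaled_def by (subst integral_distr) (auto simp: unit_clamp_def)
  finally show ?thesis .
qed

section \<open>The Beta(2, 1) law\<close>

lemma beta21_density: "beta21 = density lborel (\<lambda>x. ennreal (2 * x * indicator {0..1} x))"
  unfolding beta21_def by (intro arg_cong[where f = "density lborel"] ext) (simp add: indicator_def)

lemma nn_integral_double_id:
  assumes "0 \<le> a"
  shows "(\<integral>\<^sup>+ t. ennreal (2 * t) * indicator {0..a} t \<partial>lborel) = ennreal (a ^ 2)"
proof -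
  have "((\<lambda>t. 2 * t) has_integral a ^ 2 - 0 ^ 2) {0..a}"
  proof (rule fundamental_theorem_of_calculus)
    fix x :: real
    have "((\<lambda>t. t ^ 2) has_real_derivative 2 * x) (at x within {0..a})"
      by (auto intro!: derivative_eq_intros)
    then show "((\<lambda>t. t ^ 2) has_vector_derivative 2 * x) (at x within {0..a})"
      by (simp add: has_real_derivative_iff_has_vector_derivative)
  qed (rule assms)
  then have "((\<lambda>t. 2 * t) has_integral a ^ 2) {0..a}"
    by simp
  from nn_integral_has_integral_lebesgue'[OF _ this] show ?thesis
    by simp
qed

lemma emeasure_beta21_atMost: "emeasure beta21 {..x} = ennreal (if x < 0 then 0 else (min x 1) ^ 2)"
proof (cases "x < 0")
  case True
  have "(\<lambda>t. ennreal (2 * t) * indicator {0..1} t * indicator {..x} t) = (\<lambda>t. 0)"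
    using True by (auto simp: indicator_def)
  then show ?thesis
    using True unfolding beta21_def by (subst emeasure_density) auto
next
  case False
  have "(\<integral>\<^sup>+ t. ennreal (2 * t) * indicator {0..1} t * indicator {..x} t \<partial>lborel)
          = (\<integral>\<^sup>+ t. ennreal (2 * t) * indicator {0..min x 1} t \<partial>lborel)"
    by (intro nn_integral_cong) (auto simp: indicator_def)
  also have "\<dots> = ennreal ((min x 1) ^ 2)"
    using False by (intro nn_integral_double_id) simp
  finally show ?thesis
    using False unfolding beta21_def by (subst emeasure_density) auto
qed

lemma prob_space_beta21: "prob_space beta21"
proof (rule prob_spaceI)
  have "emeasure beta21 UNIV = (\<integral>\<^sup>+ t. ennreal (2 * t) * indicator {0..1} t \<partial>lborel)"
    unfolding beta21_def by (subst emeasure_density) auto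
  then show "emeasure beta21 (space beta21) = 1"
    using nn_integral_double_id[of 1] by (simp add: beta21_def)
qed

lemma real_distribution_beta21: "real_distribution beta21"
  using prob_space_beta21
  by (simp add: real_distribution_def real_distribution_axioms_def beta21_def)

lemma cdf_beta21: "cdf beta21 x = (if x < 0 then 0 else (min x 1) ^ 2)"
  using emeasure_beta21_atMost[of x] by (simp add: cdf_def measure_def)

lemma integral_beta21:
  "h \<in> borel_measurable borel \<Longrightarrow>
     integral\<^sup>L beta21 h = (\<integral>x. (2 * x * indicator {0..1} x) * h x \<partial>lborel)"
  unfolding beta21_density by (subst integral_density) (auto simp: indicator_def)

lemma moment_beta21: "integral\<^sup>L beta21 (\<lambda>x. x ^ r) = 2 / (real r + 2)"
proof -
  have "integral\<^sup>L beta21 (\<lambda>x. x ^ r) = (\<integral>x. 2 * (x ^ Suc r * indicator {0..1} x) \<partial>lborel)"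
    by (simp add: integral_beta21 mult_ac)
  also have "\<dots> = 2 / (real r + 2)"
    by (simp only: integral_mult_right_zero integral_power[OF zero_le_one]) (simp add: add.commute)
  finally show ?thesis .
qed

lemma integral_beta21_power:
  "integral\<^sup>L beta21 (\<lambda>x. x ^ r) = integral\<^sup>L beta21 (\<lambda>x. unit_clamp x ^ r)"
proof -
  have clamp: "(2 * x * indicator {0..1} x) * x ^ r
                = (2 * x * indicator {0..1} x) * unit_clamp x ^ r" for x :: real
    by (simp add: indicator_def unit_clamp_def)
  have "integral\<^sup>L beta21 (\<lambda>x. x ^ r) = (\<integral>x. (2 * x * indicator {0..1} x) * x ^ r \<partial>lborel)"
    by (simp add: integral_beta21)
  also have "\<dots> = (\<integral>x. (2 * x * indicator {0..1} x) * unit_clamp x ^ r \<partial>lborel)"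
    by (simp only: clamp)
  also have "\<dots> = integral\<^sup>L beta21 (\<lambda>x. unit_clamp x ^ r)"
    by (rule integral_beta21[symmetric]) (simp add: unit_clamp_def)
  finally show ?thesis .
qed

lemma cdf_law_scaled_tendsto: "(\<lambda>n. cdf (law_scaled (Suc n)) x) \<longlonglongrightarrow> cdf beta21 x"
proof (cases "x < 0")
  case True
  then show ?thesis
    by (simp add: cdf_law_scaled_neg cdf_beta21)
next
  case False
  define M where "M n = min (Suc n) (nat \<lfloor>x * real (Suc n)\<rfloor>)" for n
  have ratio_n: "(\<lambda>n. height_ratio (Suc n) (Suc n)) \<longlonglongrightarrow> 0"
    using LIMSEQ_Suc[OF height_ratio_tendsto_zero] .
  have ratio_M: "(\<lambda>n. height_ratio (Suc n) (M n)) \<longlonglongrightarrow> 0"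
  proof (rule tendsto_sandwich[OF _ _ tendsto_const ratio_n])
    show "\<forall>\<^sub>F n in sequentially. height_ratio (Suc n) (M n) \<le> height_ratio (Suc n) (Suc n)"
      by (simp add: M_def height_ratio_mono)
  qed (simp add: height_ratio_nonneg)
  have "(\<lambda>n. ((real (M n) / real (Suc n)) ^ 2 - height_ratio (Suc n) (M n))
                / (1 - height_ratio (Suc n) (Suc n))) \<longlonglongrightarrow> ((min 1 x) ^ 2 - 0) / (1 - 0)"
    using False unfolding M_def
    by (intro tendsto_intros ratio_n ratio_M[unfolded M_def] floor_scaled_min_tendsto) simp_all
  then show ?thesis
    using False by (simp add: cdf_law_scaled_nonneg M_def cdf_beta21 min.commute)
qed

lemma weak_conv_law_scaled: "weak_conv_m (\<lambda>n. law_scaled (Suc n)) beta21"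
  unfolding weak_conv_m_def weak_conv_def using cdf_law_scaled_tendsto by blast

lemma moment_law_scaled_tendsto:
  "(\<lambda>n. integral\<^sup>L (law_scaled (Suc n)) (\<lambda>x. x ^ r)) \<longlonglongrightarrow> integral\<^sup>L beta21 (\<lambda>x. x ^ r)"
proof -
  have "(\<lambda>n. integral\<^sup>L (law_scaled (Suc n)) (\<lambda>x. unit_clamp x ^ r))
          \<longlonglongrightarrow> integral\<^sup>L beta21 (\<lambda>x. unit_clamp x ^ r)"
  proof (rule weak_conv_imp_integral_bdd_continuous_conv
              [OF _ real_distribution_beta21 weak_conv_law_scaled])
    show "real_distribution (law_scaled (Suc n))" for n
      by (simp add: real_distribution_law_scaled)
    show "isCont (\<lambda>x. unit_clamp x ^ r) x" for x
      unfolding unit_clamp_def by (intro continuous_intros)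
    show "norm (unit_clamp x ^ r) \<le> 1" for x
    proof -
      have "0 \<le> unit_clamp x" "unit_clamp x \<le> 1"
        by (auto simp: unit_clamp_def)
      then show ?thesis
        by (simp add: power_abs power_le_one)
    qed
  qed
  then show ?thesis
    by (simp add: integral_law_scaled_power integral_beta21_power)
qed

theorem theorem16:
  shows "(\<forall>n\<ge>1. prob_space (law_scaled n))
    \<and> prob_space beta21
    \<and> weak_conv_m (\<lambda>n. law_scaled (Suc n)) beta21
    \<and> (\<forall>r::nat. (\<lambda>n. integral\<^sup>L (law_scaled (Suc n)) (\<lambda>x. x ^ r))
                   \<longlonglongrightarrow> integral\<^sup>L beta21 (\<lambda>x. x ^ r))
    \<and> (\<forall>r::nat. integral\<^sup>L beta21 (\<lambda>x. x ^ r) = 2 / (real r + 2))"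
  using prob_space_law_scaled prob_space_beta21 weak_conv_law_scaled
    moment_law_scaled_tendsto moment_beta21
  by blast

end
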